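(* On the Lie algebra $\mathfrak{d}_{4,2}$ with basis $e_1,\dots,e_4$, non-zero brackets $[e_1,e_2]=e_3$, $[e_4,e_3]=e_3$, $[e_4,e_1]=2e_1$, $[e_4,e_2]=-e_2$, and orientation $\mu=e^{1234}$, let $J$ be the almost complex structure inducing the orientation $\mu$ whose space of $J$-anti-invariant 2-forms is $\Lambda^-_J=\mathrm{Span}\big((e^{12}+e^{34})+(e^{14}+e^{23}),\ e^{13}-e^{24}\big)$ (explicitly, $Je_1=\tfrac{1}{\sqrt2}(e_2-e_4)$, $Je_2=\tfrac{1}{\sqrt2}(-e_1-e_3)$, $Je_3=\tfrac{1}{\sqrt2}(e_2+e_4)$, $Je_4=\tfrac{1}{\sqrt2}(e_1-e_3)$). Then $J$ is tamed by some symplectic form on $\mathfrak{d}_{4,2}$ but is not compatible with any symplectic form on $\mathfrak{d}_{4,2}$.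
   Context: $e^1,\dots,e^4$ is the dual basis, $e^{ij}=e^i\wedge e^j$, $e^{1234}=e^1\wedge e^2\wedge e^3\wedge e^4$. A 2-form $\alpha$ is $J$-anti-invariant if $\alpha(J\cdot,J\cdot)=-\alpha$. The Chevalley–Eilenberg differential is $d\alpha(u,v)=-\alpha([u,v])$ on 1-forms, extended by Leibniz; a symplectic form is a closed non-degenerate 2-form. $J$ is tamed by $\omega$ if $\omega(u,Ju)>0$ for all $u\neq0$, and compatible with $\omega$ if tamed and $\omega(Jv,Jw)=\omega(v,w)$ for all $v,w$. *)

theory Defs
  imports "HOL-Analysis.Analysis"
begin

definition e :: "4 \<Rightarrow> real^4" where
  "e i = axis i 1"

definition br :: "4 \<Rightarrow> 4 \<Rightarrow> real^4" where
  "br i j =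
    (if i = 1 \<and> j = 2 then e 3 else if i = 2 \<and> j = 1 then - e 3
     else if i = 4 \<and> j = 3 then e 3 else if i = 3 \<and> j = 4 then - e 3
     else if i = 4 \<and> j = 1 then 2 *\<^sub>R e 1 else if i = 1 \<and> j = 4 then - (2 *\<^sub>R e 1)
     else if i = 4 \<and> j = 2 then - e 2 else if i = 2 \<and> j = 4 then e 2
     else 0)"

definition lie :: "real^4 \<Rightarrow> real^4 \<Rightarrow> real^4" where
  "lie u v = (\<Sum>i\<in>UNIV. \<Sum>j\<in>UNIV. (u $ i * v $ j) *\<^sub>R br i j)"

definition Jb :: "4 \<Rightarrow> real^4" where
  "Jb i =
    (if i = 1 then (1 / sqrt 2) *\<^sub>R (e 2 - e 4)
     else if i = 2 then (1 / sqrt 2) *\<^sub>R (- e 1 - e 3)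
     else if i = 3 then (1 / sqrt 2) *\<^sub>R (e 2 + e 4)
     else (1 / sqrt 2) *\<^sub>R (e 1 - e 3))"

definition J :: "real^4 \<Rightarrow> real^4" where
  "J u = (\<Sum>i\<in>UNIV. u $ i *\<^sub>R Jb i)"

definition two_form :: "(real^4 \<Rightarrow> real^4 \<Rightarrow> real) \<Rightarrow> bool" where
  "two_form \<omega> \<longleftrightarrow> bilinear \<omega> \<and> (\<forall>u. \<omega> u u = 0)"

text \<open>Chevalley--Eilenberg differential of a 2-form (trivial coefficients).\<close>
definition d2 :: "(real^4 \<Rightarrow> real^4 \<Rightarrow> real) \<Rightarrow> real^4 \<Rightarrow> real^4 \<Rightarrow> real^4 \<Rightarrow> real" where
  "d2 \<omega> x y z = - \<omega> (lie x y) z + \<omega> (lie x z) y - \<omega> (lie y z) x"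

definition symplectic :: "(real^4 \<Rightarrow> real^4 \<Rightarrow> real) \<Rightarrow> bool" where
  "symplectic \<omega> \<longleftrightarrow> two_form \<omega> \<and> (\<forall>x y z. d2 \<omega> x y z = 0)
     \<and> (\<forall>u. u \<noteq> 0 \<longrightarrow> (\<exists>v. \<omega> u v \<noteq> 0))"

definition tames :: "(real^4 \<Rightarrow> real^4 \<Rightarrow> real) \<Rightarrow> (real^4 \<Rightarrow> real^4) \<Rightarrow> bool" where
  "tames \<omega> JJ \<longleftrightarrow> (\<forall>u. u \<noteq> 0 \<longrightarrow> \<omega> u (JJ u) > 0)"

definition compatible :: "(real^4 \<Rightarrow> real^4 \<Rightarrow> real) \<Rightarrow> (real^4 \<Rightarrow> real^4) \<Rightarrow> bool" where
  "compatible \<omega> JJ \<longleftrightarrow> tames \<omega> JJ \<and> (\<forall>v w. \<omega> (JJ v) (JJ w) = \<omega> v w)"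

end

theory Submission
  imports Defs
begin

text \<open>The form \<open>-(e\<^sup>1\<^sup>4 + e\<^sup>2\<^sup>3)\<close> is closed, and \<open>\<omega>(u, J u) = |u|\<^sup>2 / \<surd>2\<close>, so it is a
  symplectic form taming \<open>J\<close>. Conversely, for any closed \<open>J\<close>-invariant 2-form \<open>\<omega>\<close>, closedness
  on \<open>(e\<^sub>1, e\<^sub>2, e\<^sub>4)\<close> gives \<open>\<omega>\<^sub>3\<^sub>4 = -\<omega>\<^sub>1\<^sub>2\<close> and invariance on \<open>(e\<^sub>1, e\<^sub>4)\<close> gives
  \<open>\<omega>\<^sub>2\<^sub>3 = -\<omega>\<^sub>1\<^sub>4\<close>; then \<open>\<surd>2 (\<omega>(e\<^sub>1, J e\<^sub>1) + \<omega>(e\<^sub>3, J e\<^sub>3)) = \<omega>\<^sub>1\<^sub>2 - \<omega>\<^sub>1\<^sub>4 - \<omega>\<^sub>2\<^sub>3 + \<omega>\<^sub>3\<^sub>4 = 0\<close>,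
  so \<open>\<omega>\<close> cannot tame \<open>J\<close>.\<close>

lemma alternating_bilinear_antisym:
  fixes f :: "'a::real_vector \<Rightarrow> 'a \<Rightarrow> real"
  assumes "bilinear f" and "\<And>u. f u u = 0"
  shows "f x y = - f y x"
proof -
  have "f (x + y) (x + y) = 0" by (rule assms(2))
  then show ?thesis
    using assms(2)[of x] assms(2)[of y]
    by (simp add: bilinear_ladd[OF assms(1)] bilinear_radd[OF assms(1)])
qed

lemma two_form_antisym: "two_form \<omega> \<Longrightarrow> \<omega> x y = - \<omega> y x"
  unfolding two_form_def by (blast intro: alternating_bilinear_antisym)

lemma e_nth: "e i $ k = (if k = i then 1 else 0)"
  by (simp add: e_def axis_def)

lemma e_nonzero: "e i \<noteq> 0"
  by (simp add: e_def)

lemma J_e: "J (e i) = Jb i"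
  using exhaust_4[of i] unfolding J_def by (auto simp: sum_4 e_nth)

lemma lie_e: "lie (e i) (e j) = br i j"
  using exhaust_4[of i] exhaust_4[of j] unfolding lie_def by (auto simp: sum_4 e_nth)

lemma J_nth:
  "J u $ 1 = (u$4 - u$2) / sqrt 2" "J u $ 2 = (u$1 + u$3) / sqrt 2"
  "J u $ 3 = (- u$2 - u$4) / sqrt 2" "J u $ 4 = (u$3 - u$1) / sqrt 2"
  unfolding J_def by (simp_all add: sum_4 Jb_def e_nth field_simps)

lemma lie_nth:
  "lie u v $ 1 = 2 * (u$4 * v$1 - u$1 * v$4)" "lie u v $ 2 = u$2 * v$4 - u$4 * v$2"
  "lie u v $ 3 = u$1 * v$2 - u$2 * v$1 + u$4 * v$3 - u$3 * v$4" "lie u v $ 4 = 0"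
  unfolding lie_def by (simp_all add: sum_4 br_def e_nth algebra_simps)

definition taming_form :: "real^4 \<Rightarrow> real^4 \<Rightarrow> real" where
  "taming_form u v = - (u$1 * v$4 - u$4 * v$1) - (u$2 * v$3 - u$3 * v$2)"

lemma taming_form_J: "taming_form u (J u) = (u \<bullet> u) / sqrt 2"
proof -
  have sqrt2: "sqrt 2 * (sqrt 2 * x) = 2 * x" for x :: real
    by (simp flip: mult.assoc)
  show ?thesis
    unfolding taming_form_def J_nth inner_vec_def sum_4
    by (simp add: field_simps power2_eq_square sqrt2)
qed

lemma tames_taming_form: "tames taming_form J"
  unfolding tames_def taming_form_J by simp

lemma symplectic_taming_form: "symplectic taming_form"
  unfolding symplectic_def two_form_def
proof (intro conjI allI impI)
  show "bilinear taming_form"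
    unfolding bilinear_def linear_iff taming_form_def by (auto simp: algebra_simps)
  show "taming_form u u = 0" for u
    unfolding taming_form_def by simp
  show "d2 taming_form x y z = 0" for x y z
    unfolding d2_def taming_form_def lie_nth by (simp add: algebra_simps)
  show "\<exists>v. taming_form u v \<noteq> 0" if "u \<noteq> 0" for u
    using tames_taming_form that unfolding tames_def by (metis less_irrefl)
qed

lemma closed_two_form_e34:
  assumes "symplectic \<omega>"
  shows "\<omega> (e 3) (e 4) = - \<omega> (e 1) (e 2)"
proof -
  have tf: "two_form \<omega>" and b: "bilinear \<omega>"
    using assms unfolding symplectic_def two_form_def by auto
  have "d2 \<omega> (e 1) (e 2) (e 4) = 0"
    using assms unfolding symplectic_def by blast
  then show ?thesis
    unfolding d2_def lie_e br_def
    by (simp add: bilinear_lmul[OF b] bilinear_lneg[OF b] two_form_antisym[OF tf, of "e 2" "e 1"])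
qed

lemma J_invariant_two_form_e23:
  assumes "symplectic \<omega>"
    and inv: "\<omega> (J (e 1)) (J (e 4)) = \<omega> (e 1) (e 4)"
  shows "\<omega> (e 2) (e 3) = - \<omega> (e 1) (e 4)"
proof -
  have tf: "two_form \<omega>" and b: "bilinear \<omega>"
    using assms unfolding symplectic_def two_form_def by auto
  have "\<omega> (J (e 1)) (J (e 4))
      = (\<omega> (e 2) (e 1) - \<omega> (e 2) (e 3) - \<omega> (e 4) (e 1) + \<omega> (e 4) (e 3)) / 2"
    unfolding J_e Jb_def
    by (simp add: bilinear_lmul[OF b] bilinear_rmul[OF b] bilinear_lsub[OF b]
        bilinear_rsub[OF b] algebra_simps)
  then show ?thesis
    using inv closed_two_form_e34[OF \<open>symplectic \<omega>\<close>]
      two_form_antisym[OF tf, of "e 2" "e 1"] two_form_antisym[OF tf, of "e 4" "e 1"]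
      two_form_antisym[OF tf, of "e 4" "e 3"]
    by (simp add: field_simps)
qed

lemma taming_two_form_e1_e3:
  assumes b: "bilinear \<omega>" and "tames \<omega> J"
  shows "\<omega> (e 1) (e 2) - \<omega> (e 1) (e 4) > 0" and "\<omega> (e 3) (e 2) + \<omega> (e 3) (e 4) > 0"
proof -
  have pos: "\<omega> (e i) (J (e i)) > 0" for i
    using \<open>tames \<omega> J\<close> e_nonzero unfolding tames_def by blast
  have "\<omega> (e 1) (J (e 1)) = (\<omega> (e 1) (e 2) - \<omega> (e 1) (e 4)) / sqrt 2"
    and "\<omega> (e 3) (J (e 3)) = (\<omega> (e 3) (e 2) + \<omega> (e 3) (e 4)) / sqrt 2"
    unfolding J_e Jb_def by (simp_all add: bilinear_rmul[OF b] bilinear_rsub[OF b] bilinear_radd[OF b])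
  with pos[of 1] pos[of 3]
  show "\<omega> (e 1) (e 2) - \<omega> (e 1) (e 4) > 0" and "\<omega> (e 3) (e 2) + \<omega> (e 3) (e 4) > 0"
    by (simp_all add: zero_less_divide_iff)
qed

lemma not_symplectic_compatible_J:
  assumes "symplectic \<omega>"
  shows "\<not> compatible \<omega> J"
proof
  assume "compatible \<omega> J"
  have tf: "two_form \<omega>"
    using assms unfolding symplectic_def by blast
  then have "bilinear \<omega>"
    unfolding two_form_def by blast
  have "\<omega> (e 2) (e 3) = - \<omega> (e 1) (e 4)"
    using J_invariant_two_form_e23[OF assms] \<open>compatible \<omega> J\<close> unfolding compatible_def by blast
  then show False
    using taming_two_form_e1_e3[OF \<open>bilinear \<omega>\<close>] \<open>compatible \<omega> J\<close> closed_two_form_e34[OF assms]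
      two_form_antisym[OF tf, of "e 3" "e 2"]
    unfolding compatible_def by fastforce
qed

theorem mainTheorem4:
  shows "(\<exists>\<omega>. symplectic \<omega> \<and> tames \<omega> J) \<and> \<not> (\<exists>\<omega>. symplectic \<omega> \<and> compatible \<omega> J)"
  using symplectic_taming_form tames_taming_form not_symplectic_compatible_J by blast

end
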